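(* With notation as below, suppose $\Phi_1<\Phi_2$, i.e. $\Phi_1(t)\le\Phi_2(t)$ for all $t\in(0,1)$ with strict inequality for at least one $t\in(0,1)$. Then: (a) if $\alpha<0$, then $\mu_1(\alpha)<\mu_2(\alpha)$; (b) if $0<\alpha<\tfrac12$, then $\mu_1(\alpha)>\mu_2(\alpha)$; (c) $\mu_1'>\mu_2'$.
   Context: For $j=1,2$, let $\xi_j$ be a random variable with values in $\{0,1,2,\dots\}$ with $\mathbb E\xi_j=1$ and $0<\operatorname{Var}\xi_j<\infty$, with probability generating function $\Phi_j(t)=\mathbb E t^{\xi_j}$, and let $\mathcal T^{(j)}$ be a Galton–Watson tree with offspring distribution $\xi_j$. For real $\alpha<1/2$, $\mu_j(\alpha):=\mathbb E|\mathcal T^{(j)}|^\alpha$ and $\mu_j':=\mathbb E\log|\mathcal T^{(j)}|$, where $|\cdot|$ is the number of vertices. *)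

theory Defs
  imports "HOL-Probability.Probability"
begin

text \<open>Finite rooted ordered (plane) trees.\<close>
datatype ptree = Node "ptree list"

fun tsize :: "ptree \<Rightarrow> nat" where
  "tsize (Node ts) = 1 + sum_list (map tsize ts)"

text \<open>Galton--Watson law on finite plane trees: P(T = t) is the product over all
  vertices v of t of P(xi = outdegree of v).\<close>
fun gw_prob :: "nat pmf \<Rightarrow> ptree \<Rightarrow> real" where
  "gw_prob p (Node ts) = pmf p (length ts) * prod_list (map (gw_prob p) ts)"

text \<open>P(|T| = n) (the set of plane trees with n vertices is finite).\<close>
definition gw_size_prob :: "nat pmf \<Rightarrow> nat \<Rightarrow> real" where
  "gw_size_prob p n = (\<Sum>t \<in> {t. tsize t = n}. gw_prob p t)"

definition pgf :: "nat pmf \<Rightarrow> real \<Rightarrow> real" where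
  "pgf p t = measure_pmf.expectation p (\<lambda>k. t ^ k)"

text \<open>mu(alpha) = E |T|^alpha and mu' = E log |T|.\<close>
definition gw_mu :: "nat pmf \<Rightarrow> real \<Rightarrow> real" where
  "gw_mu p \<alpha> = (\<Sum>n. gw_size_prob p n * real n powr \<alpha>)"

definition gw_mu' :: "nat pmf \<Rightarrow> real" where
  "gw_mu' p = (\<Sum>n. gw_size_prob p n * ln (real n))"

definition critical_finite_var :: "nat pmf \<Rightarrow> bool" where
  "critical_finite_var p \<longleftrightarrow>
     integrable (measure_pmf p) (\<lambda>k. (real k)^2) \<and>
     measure_pmf.expectation p real = 1 \<and>
     measure_pmf.variance p real > 0"

end

theory Submission
  imports Defs
begin

text \<open>Let \<open>F(z) = E z\<^sup>|\<^sup>T\<^sup>|\<close>. Splitting a tree at its root gives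
  \<open>F(z) = z \<Phi>(F(z))\<close>, and by convexity of \<open>\<Phi>\<close> this fixed point is unique in \<open>[0,1)\<close>;
  hence \<open>\<Phi>\<^sub>1 < \<Phi>\<^sub>2\<close> gives \<open>F\<^sub>1 \<le> F\<^sub>2\<close> on \<open>(0,1)\<close>, strictly on an interval.
  For \<open>n \<ge> 1\<close>,
  \<open>\<Gamma>(-\<alpha>) n\<^sup>\<alpha> = \<integral>\<^sub>0\<^sup>\<infinity> x\<^sup>-\<^sup>\<alpha>\<^sup>-\<^sup>1 e\<^sup>-\<^sup>n\<^sup>x dx\<close> (\<open>\<alpha> < 0\<close>),
  \<open>\<Gamma>(1-\<alpha>)/\<alpha> n\<^sup>\<alpha> = \<integral>\<^sub>0\<^sup>\<infinity> x\<^sup>-\<^sup>\<alpha>\<^sup>-\<^sup>1 (1 - e\<^sup>-\<^sup>n\<^sup>x) dx\<close> (\<open>0 < \<alpha> < 1\<close>)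
  and \<open>ln n = \<integral>\<^sub>0\<^sup>\<infinity> (e\<^sup>-\<^sup>x - e\<^sup>-\<^sup>n\<^sup>x)/x dx\<close>,
  so \<open>\<mu>(\<alpha>)\<close> and \<open>\<mu>'\<close> are integrals of \<open>F(e\<^sup>-\<^sup>x)\<close>, \<open>1 - F(e\<^sup>-\<^sup>x)\<close> and
  \<open>e\<^sup>-\<^sup>x - F(e\<^sup>-\<^sup>x)\<close> against positive weights, and the comparison of \<open>F\<^sub>1, F\<^sub>2\<close> carries
  over with the stated signs. Convergence at \<open>x = 0\<close> rests on \<open>1 - F(e\<^sup>-\<^sup>x) = O(\<surd>x)\<close>,
  a consequence of \<open>\<Phi>(1 - s) \<ge> 1 - s + P(\<xi> \<ge> 2) s\<^sup>2\<close> for a critical offspring law with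
  positive variance.\<close>

section \<open>Plane trees and forests\<close>

lemma tsize_ge_1: "tsize t \<ge> 1"
  by (cases t) simp

lemma tsize_neq_0 [simp]: "tsize t \<noteq> 0"
  using tsize_ge_1[of t] by linarith

lemma length_le_sum_tsize: "length ts \<le> sum_list (map tsize ts)"
proof (induction ts)
  case (Cons t ts) then show ?case using tsize_ge_1[of t] by simp
qed simp

lemma tsize_le_sum_tsize: "t \<in> set ts \<Longrightarrow> tsize t \<le> sum_list (map tsize ts)"
  by (induction ts) auto

lemma finite_tsize_le: "finite {t. tsize t \<le> n}"
proof (induction n)
  case 0
  then show ?case by simp
next
  case (Suc n)
  let ?Forests = "{ts. set ts \<subseteq> {t. tsize t \<le> n} \<and> length ts \<le> n}"
  have "{t. tsize t \<le> Suc n} \<subseteq> Node ` ?Forests"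
  proof
    fix t assume "t \<in> {t. tsize t \<le> Suc n}"
    then obtain ts where "t = Node ts" and "sum_list (map tsize ts) \<le> n"
      by (cases t) auto
    then show "t \<in> Node ` ?Forests"
      using length_le_sum_tsize[of ts] tsize_le_sum_tsize[of _ ts] by force
  qed
  moreover have "finite ?Forests"
    using finite_lists_length_le[OF Suc.IH] by simp
  ultimately show ?case by (meson finite_imageI finite_subset)
qed

lemma finite_tsize_eq: "finite {t. tsize t = n}"
  by (rule finite_subset[OF _ finite_tsize_le[of n]]) auto

definition forests :: "nat \<Rightarrow> nat \<Rightarrow> ptree list set" where
  "forests k m = {ts. length ts = k \<and> sum_list (map tsize ts) = m}"

lemma finite_forests: "finite (forests k m)"
proof -
  have "forests k m \<subseteq> {ts. set ts \<subseteq> {t. tsize t \<le> m} \<and> length ts \<le> k}"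
    unfolding forests_def using tsize_le_sum_tsize by fastforce
  moreover have "finite {ts. set ts \<subseteq> {t. tsize t \<le> m} \<and> length ts \<le> k}"
    using finite_lists_length_le[OF finite_tsize_le] by simp
  ultimately show ?thesis by (rule finite_subset)
qed

lemma forests_empty: "m < k \<Longrightarrow> forests k m = {}"
  unfolding forests_def using length_le_sum_tsize by (metis (mono_tags, lifting) empty_Collect_eq leD)

definition forest_prob :: "nat pmf \<Rightarrow> nat \<Rightarrow> nat \<Rightarrow> real" where
  "forest_prob p k m = (\<Sum>ts\<in>forests k m. prod_list (map (gw_prob p) ts))"

lemma gw_prob_nonneg: "gw_prob p t \<ge> 0"
  by (induction t) (auto intro!: prod_list_nonneg mult_nonneg_nonneg)

lemma gw_size_prob_nonneg: "gw_size_prob p n \<ge> 0"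
  unfolding gw_size_prob_def by (auto intro!: sum_nonneg gw_prob_nonneg)

lemma forest_prob_nonneg: "forest_prob p k m \<ge> 0"
  unfolding forest_prob_def by (auto intro!: sum_nonneg prod_list_nonneg gw_prob_nonneg)

lemma gw_size_prob_0 [simp]: "gw_size_prob p 0 = 0"
  by (simp add: gw_size_prob_def)

lemma forest_prob_0: "forest_prob p 0 m = (if m = 0 then 1 else 0)"
proof -
  have "forests 0 m = (if m = 0 then {[]} else {})" unfolding forests_def by auto
  then show ?thesis unfolding forest_prob_def by simp
qed

lemma forest_prob_eq_0: "m < k \<Longrightarrow> forest_prob p k m = 0"
  by (simp add: forest_prob_def forests_empty)

lemma forest_prob_Suc:
  "forest_prob p (Suc k) m = (\<Sum>j\<le>m. gw_size_prob p j * forest_prob p k (m - j))"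
proof -
  define B where "B = (\<Union>j\<in>{..m}. {t. tsize t = j} \<times> forests k (m - j))"
  have img: "forests (Suc k) m = (\<lambda>(t, ts). t # ts) ` B"
  proof (intro equalityI subsetI)
    fix x assume "x \<in> forests (Suc k) m"
    then obtain t ts where x: "x = t # ts" "length ts = k" "tsize t + sum_list (map tsize ts) = m"
      unfolding forests_def by (cases x) auto
    then have "(t, ts) \<in> B" unfolding B_def forests_def by force
    then show "x \<in> (\<lambda>(t, ts). t # ts) ` B" using x by force
  qed (auto simp: B_def forests_def)
  have inj: "inj_on (\<lambda>(t, ts). t # ts) B" by (auto simp: inj_on_def)
  have "forest_prob p (Suc k) m = (\<Sum>(t, ts)\<in>B. gw_prob p t * prod_list (map (gw_prob p) ts))"
    unfolding forest_prob_def img by (subst sum.reindex[OF inj]) (simp add: case_prod_beta)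
  also have "\<dots> = (\<Sum>j\<le>m. \<Sum>(t, ts)\<in>{t. tsize t = j} \<times> forests k (m - j).
                     gw_prob p t * prod_list (map (gw_prob p) ts))"
    unfolding B_def by (rule sum.UNION_disjoint) (auto simp: finite_tsize_eq finite_forests)
  also have "\<dots> = (\<Sum>j\<le>m. gw_size_prob p j * forest_prob p k (m - j))"
    unfolding gw_size_prob_def forest_prob_def by (simp add: sum_product sum.cartesian_product)
  finally show ?thesis .
qed

lemma gw_size_prob_Suc: "gw_size_prob p (Suc m) = (\<Sum>k\<le>m. pmf p k * forest_prob p k m)"
proof -
  have img: "{t. tsize t = Suc m} = Node ` (\<Union>k\<in>{..m}. forests k m)"
  proof (intro equalityI subsetI)
    fix t assume "t \<in> {t. tsize t = Suc m}"
    then obtain ts where "t = Node ts" "sum_list (map tsize ts) = m" by (cases t) auto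
    then show "t \<in> Node ` (\<Union>k\<in>{..m}. forests k m)"
      unfolding forests_def using length_le_sum_tsize[of ts] by force
  qed (auto simp: forests_def)
  have "gw_size_prob p (Suc m) = (\<Sum>ts\<in>(\<Union>k\<in>{..m}. forests k m). gw_prob p (Node ts))"
    unfolding gw_size_prob_def img by (subst sum.reindex) (auto simp: inj_on_def)
  also have "\<dots> = (\<Sum>k\<le>m. \<Sum>ts\<in>forests k m. gw_prob p (Node ts))"
    by (rule sum.UNION_disjoint) (auto simp: finite_forests, auto simp: forests_def)
  also have "\<dots> = (\<Sum>k\<le>m. pmf p k * forest_prob p k m)"
    unfolding forest_prob_def by (intro sum.cong refl) (auto simp: forests_def sum_distrib_left)
  finally show ?thesis .
qed

section \<open>Probability generating functions\<close>

lemma pmf_expectation_sums: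
  fixes f :: "nat \<Rightarrow> real"
  assumes "integrable (measure_pmf p) f"
  shows "(\<lambda>k. pmf p k * f k) sums (measure_pmf.expectation p f)"
proof -
  have i: "integrable (count_space UNIV) (\<lambda>k. pmf p k *\<^sub>R f k)"
    using assms unfolding measure_pmf_eq_density by (subst (asm) integrable_density) auto
  have "measure_pmf.expectation p f = integral\<^sup>L (count_space UNIV) (\<lambda>k. pmf p k *\<^sub>R f k)"
    unfolding measure_pmf_eq_density by (subst integral_density) auto
  then show ?thesis using sums_integral_count_space_nat[OF i] by simp
qed

lemma pgf_sums:
  assumes "\<bar>t\<bar> \<le> 1"
  shows "(\<lambda>k. pmf p k * t ^ k) sums pgf p t"
  unfolding pgf_def
  by (rule pmf_expectation_sums, rule measure_pmf.integrable_const_bound[where B=1])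
     (simp_all add: assms power_abs power_le_one)

lemma pmf_sums_1: "(\<lambda>k. pmf p k) sums 1"
  using pgf_sums[of 1 p] by (simp add: pgf_def)

lemma pgf_1: "pgf p 1 = 1"
  using pgf_sums[of 1 p] pmf_sums_1[of p] sums_unique2 by fastforce

lemma pgf_mono:
  assumes "0 \<le> a" "a \<le> b" "b \<le> 1"
  shows "pgf p a \<le> pgf p b"
  by (rule sums_le[OF _ pgf_sums pgf_sums]) (use assms in \<open>auto intro!: mult_left_mono power_mono\<close>)

lemma pgf_le_1:
  assumes "0 \<le> a" "a \<le> 1"
  shows "pgf p a \<le> 1"
  using pgf_mono[of a 1 p] pgf_1[of p] assms by simp

lemma power_convex_comb_le:
  fixes a t :: real
  assumes "0 \<le> a" "0 \<le> t" "t \<le> 1"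
  shows "((1 - t) * a + t) ^ k \<le> (1 - t) * a ^ k + t"
proof -
  have "convex_on {0::real..} (\<lambda>x. x ^ k)"
  proof (rule f''_ge0_imp_convex)
    show "((\<lambda>x. x ^ k) has_real_derivative of_nat k * x^(k-1)) (at x)" for x :: real
      by (rule derivative_eq_intros | simp)+
    show "((\<lambda>x. of_nat k * x^(k-1)) has_real_derivative of_nat k * of_nat (k-1) * x^(k-2)) (at x)"
      for x :: real
      by (rule derivative_eq_intros | simp add: eval_nat_numeral)+
  qed auto
  from convex_onD[OF this, of t a 1] assms show ?thesis by simp
qed

lemma pgf_convex:
  fixes a t :: real
  assumes "0 \<le> a" "a \<le> 1" "0 \<le> t" "t \<le> 1"
  shows "pgf p ((1 - t) * a + t) \<le> (1 - t) * pgf p a + t"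
proof -
  have "(1 - t) * a + t \<le> 1" using assms mult_left_le[of a "1 - t"] by simp
  then have lhs: "(\<lambda>k. pmf p k * ((1 - t) * a + t) ^ k) sums pgf p ((1 - t) * a + t)"
    using assms by (intro pgf_sums) auto
  have rhs: "(\<lambda>k. (1 - t) * (pmf p k * a ^ k) + t * pmf p k) sums ((1 - t) * pgf p a + t * 1)"
    by (intro sums_add sums_mult pgf_sums pmf_sums_1) (use assms in auto)
  have "pmf p k * ((1 - t) * a + t) ^ k \<le> pmf p k * ((1 - t) * a ^ k + t)" for k
    by (rule mult_left_mono[OF power_convex_comb_le[OF assms(1,3,4)]]) simp
  then show ?thesis using sums_le[OF _ lhs rhs] by (simp add: algebra_simps)
qed

lemma critical_mean_sums:
  assumes "critical_finite_var p"
  shows "(\<lambda>k. pmf p k * real k) sums 1"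
proof -
  have sq: "integrable (measure_pmf p) (\<lambda>k. (real k)^2)" and mean: "measure_pmf.expectation p real = 1"
    using assms unfolding critical_finite_var_def by auto
  have "integrable (measure_pmf p) real"
    by (rule Bochner_Integration.integrable_bound[OF sq])
       (simp_all add: power2_eq_square of_nat_mult[symmetric] le_square del: of_nat_mult)
  from pmf_expectation_sums[OF this] mean show ?thesis by simp
qed

text \<open>\<open>P(\<xi> \<ge> 2)\<close>, the constant in the quadratic lower bound for \<open>\<Phi>\<close> near \<open>1\<close>.\<close>
definition branch_prob :: "nat pmf \<Rightarrow> real" where
  "branch_prob p = 1 - pmf p 0 - pmf p 1"

lemma branch_prob_sums: "(\<lambda>k. pmf p k * (if 2 \<le> k then 1 else 0)) sums branch_prob p"
proof -
  have "(\<lambda>k. pmf p k - (if k = 0 then pmf p k else 0) - (if k = 1 then pmf p k else 0))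
          sums (1 - pmf p 0 - pmf p 1)"
    by (intro sums_diff pmf_sums_1 sums_single)
  moreover have "(\<lambda>k. pmf p k - (if k = 0 then pmf p k else 0) - (if k = 1 then pmf p k else 0))
                 = (\<lambda>k. pmf p k * (if 2 \<le> k then 1 else 0))"
    by (rule ext) auto
  ultimately show ?thesis unfolding branch_prob_def by simp
qed

lemma branch_prob_pos:
  assumes "critical_finite_var p"
  shows "branch_prob p > 0"
proof (rule ccontr)
  assume "\<not> branch_prob p > 0"
  moreover have "branch_prob p \<ge> 0" by (rule sums_le[OF _ sums_zero branch_prob_sums]) auto
  ultimately have b0: "branch_prob p = 0" by simp
  have big: "pmf p k = 0" if "2 \<le> k" for k
  proof -
    have "\<forall>k. pmf p k * (if 2 \<le> k then 1 else 0) = 0"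
      using branch_prob_sums[of p] b0 suminf_eq_zero_iff[of "\<lambda>k. pmf p k * (if 2 \<le> k then 1 else 0)"]
      by (auto simp: sums_iff)
    then show ?thesis using that by (metis (full_types) mult.right_neutral)
  qed
  have "(\<lambda>k. pmf p k * real k) = (\<lambda>k. if k = 1 then pmf p 1 else 0)"
    using big by (auto simp: fun_eq_iff)
  then have "(\<lambda>k. if k = 1 then pmf p 1 else 0) sums 1" using critical_mean_sums[OF assms] by simp
  then have p1: "pmf p 1 = 1" using sums_single[of 1 "\<lambda>_. pmf p 1"] sums_unique2 by blast
  have support: "k \<in> set_pmf p \<Longrightarrow> k = 1" for k
    using big[of k] b0 p1 unfolding branch_prob_def set_pmf_eq by (cases k; cases "k - 1") auto
  have mean: "measure_pmf.expectation p real = 1"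
    using assms unfolding critical_finite_var_def by auto
  have "measure_pmf.variance p real = (\<Sum>a\<in>{1}. pmf p a *\<^sub>R (real a - 1)^2)"
    unfolding mean by (rule integral_measure_pmf) (use support in auto)
  then show False using assms mean unfolding critical_finite_var_def by simp
qed

lemma one_minus_power_ge:
  fixes s :: real
  assumes "0 \<le> s" "s \<le> 1"
  shows "(1 - s) ^ k - 1 + real k * s \<ge> (if 2 \<le> k then s^2 else 0)"
proof (induction k rule: less_induct)
  case (less n)
  show ?case
  proof (cases "n \<le> 2")
    case True
    then have "n = 0 \<or> n = 1 \<or> n = 2" by auto
    then show ?thesis by (auto simp: power2_eq_square algebra_simps)
  next
    case False
    then obtain m where n: "n = Suc m" and m: "2 \<le> m" by (cases n) auto
    have ih: "(1 - s) ^ m - 1 + real m * s \<ge> s^2" using less[of m] n m by simp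
    have "(1 - s) ^ m \<le> 1" using assms by (intro power_le_one) auto
    then have "(1 - s) ^ Suc m - 1 + real (Suc m) * s
               = ((1 - s) ^ m - 1 + real m * s) + s * (1 - (1 - s)^m)"
      by (simp add: algebra_simps)
    also have "\<dots> \<ge> s^2" using ih \<open>(1 - s) ^ m \<le> 1\<close> assms by (smt (verit) mult_nonneg_nonneg)
    finally show ?thesis using n m by simp
  qed
qed

lemma pgf_one_minus_ge:
  assumes "critical_finite_var p" "0 \<le> s" "s \<le> 1"
  shows "pgf p (1 - s) \<ge> 1 - s + branch_prob p * s^2"
proof -
  have rhs: "(\<lambda>k. pmf p k * (1 - s) ^ k - pmf p k + s * (pmf p k * real k))
               sums (pgf p (1 - s) - 1 + s * 1)"
    by (intro sums_add sums_diff sums_mult pgf_sums pmf_sums_1 critical_mean_sums[OF assms(1)])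
       (use assms in auto)
  have lhs: "(\<lambda>k. s^2 * (pmf p k * (if 2 \<le> k then 1 else 0))) sums (s^2 * branch_prob p)"
    by (intro sums_mult branch_prob_sums)
  have "s^2 * (pmf p k * (if 2 \<le> k then 1 else 0))
          \<le> pmf p k * (1 - s) ^ k - pmf p k + s * (pmf p k * real k)" for k
  proof -
    have "pmf p k * (if 2 \<le> k then s^2 else 0) \<le> pmf p k * ((1 - s) ^ k - 1 + real k * s)"
      by (rule mult_left_mono[OF one_minus_power_ge[OF assms(2,3)]]) simp
    then show ?thesis by (simp add: algebra_simps split: if_splits)
  qed
  from sums_le[OF _ lhs rhs, OF this] show ?thesis by (simp add: algebra_simps)
qed

lemma pgf_ge_self:
  assumes "critical_finite_var p" "0 \<le> t" "t \<le> 1"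
  shows "pgf p t \<ge> t"
  using pgf_one_minus_ge[OF assms(1), of "1 - t"] assms branch_prob_pos[OF assms(1)]
  by (smt (verit) mult_nonneg_nonneg zero_le_power2)

section \<open>The generating function of the tree size\<close>

lemma sums_of_suminf_ennreal:
  fixes h :: "nat \<Rightarrow> real"
  assumes "\<And>m. 0 \<le> h m" "(\<Sum>m. ennreal (h m)) = ennreal A" "0 \<le> A"
  shows "h sums A"
proof -
  have s: "summable h" using assms by (intro summable_suminf_not_top) auto
  have "ennreal (suminf h) = ennreal A" using suminf_ennreal2[OF _ s] assms by simp
  then have "suminf h = A" using assms by (simp add: suminf_nonneg[OF s])
  then show ?thesis using s by (simp add: sums_iff)
qed

lemma sums_swap_nonneg:
  fixes g :: "nat \<Rightarrow> nat \<Rightarrow> real"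
  assumes nonneg: "\<And>k m. 0 \<le> g k m" and rows: "\<And>k. (\<lambda>m. g k m) sums a k" and total: "a sums A"
  shows "(\<lambda>m. \<Sum>k. g k m) sums A"
proof -
  have a_nonneg: "0 \<le> a k" for k by (rule sums_le[OF _ sums_zero rows]) (simp add: nonneg)
  have columns: "summable (\<lambda>k. g k m)" for m
  proof (rule summable_comparison_test'[OF sums_summable[OF total], of 0])
    show "norm (g k m) \<le> a k" for k
      using sum_le_suminf[OF sums_summable[OF rows[of k]], of "{m}"] sums_unique[OF rows[of k]] nonneg
      by simp
  qed
  have columns_ennreal: "ennreal (\<Sum>k. g k m) = (\<Sum>k. ennreal (g k m))" for m
    by (rule suminf_ennreal2[symmetric, of "\<lambda>k. g k m", OF nonneg columns])
  have rows_ennreal: "(\<Sum>m. ennreal (g k m)) = ennreal (a k)" for k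
    using suminf_ennreal2[of "\<lambda>m. g k m", OF nonneg sums_summable[OF rows[of k]]]
      sums_unique[OF rows[of k]]
    by metis
  have total_ennreal: "(\<Sum>k. ennreal (a k)) = ennreal A"
    using suminf_ennreal2[of a, OF a_nonneg sums_summable[OF total]] sums_unique[OF total] by metis
  have "(\<Sum>m. ennreal (\<Sum>k. g k m)) = (\<integral>\<^sup>+m. (\<Sum>k. ennreal (g k m)) \<partial>count_space UNIV)"
    by (simp add: columns_ennreal nn_integral_count_space_nat)
  also have "\<dots> = (\<Sum>k. \<integral>\<^sup>+m. ennreal (g k m) \<partial>count_space UNIV)"
    by (rule nn_integral_suminf) simp
  also have "\<dots> = ennreal A"
    by (simp add: nn_integral_count_space_nat rows_ennreal total_ennreal)
  finally show ?thesis
    by (rule sums_of_suminf_ennreal[OF suminf_nonneg[OF columns nonneg]])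
       (rule sums_le[OF _ sums_zero total], simp add: a_nonneg)
qed

lemma forest_prob_partial_sum_le:
  "(\<Sum>m\<le>N. forest_prob p k m) \<le> (\<Sum>j\<le>N. gw_size_prob p j) ^ k"
proof (induction k arbitrary: N)
  case 0
  then show ?case by (simp add: forest_prob_0)
next
  case (Suc k)
  let ?S = "\<Sum>j\<le>N. gw_size_prob p j"
  have inner: "(\<Sum>i\<le>N - j. forest_prob p k i) \<le> ?S ^ k" for j
  proof -
    have "(\<Sum>i\<le>N - j. gw_size_prob p i) \<le> ?S"
      by (rule sum_mono2) (auto simp: gw_size_prob_nonneg)
    then have "(\<Sum>i\<le>N - j. gw_size_prob p i) ^ k \<le> ?S ^ k"
      by (rule power_mono) (auto intro!: sum_nonneg gw_size_prob_nonneg)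
    then show ?thesis using Suc.IH[of "N - j"] by linarith
  qed
  have "(\<Sum>m\<le>N. forest_prob p (Suc k) m)
        = (\<Sum>(j, i)\<in>{(j, i). j + i \<le> N}. gw_size_prob p j * forest_prob p k i)"
    unfolding forest_prob_Suc by (rule sum.triangle_reindex_eq[symmetric])
  also have "{(j, i). j + i \<le> N} = (SIGMA j:{..N}. {..N - j})" by auto
  also have "(\<Sum>(j, i)\<in>(SIGMA j:{..N}. {..N - j}). gw_size_prob p j * forest_prob p k i)
             = (\<Sum>j\<le>N. gw_size_prob p j * (\<Sum>i\<le>N - j. forest_prob p k i))"
    by (subst sum.Sigma[symmetric]) (auto simp: sum_distrib_left)
  also have "\<dots> \<le> (\<Sum>j\<le>N. gw_size_prob p j * ?S ^ k)"
    by (intro sum_mono mult_left_mono inner gw_size_prob_nonneg)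
  also have "\<dots> = ?S ^ Suc k" by (simp add: sum_distrib_right[symmetric])
  finally show ?case .
qed

text \<open>Without criticality, the total mass of \<open>|T|\<close> can only be bounded by \<open>1\<close>;
  the induction runs through the generating-function bound \<open>\<Phi>(S) \<le> 1\<close>.\<close>
lemma gw_size_prob_partial_sum_le_1: "(\<Sum>n\<le>N. gw_size_prob p n) \<le> 1"
proof (induction N)
  case 0
  then show ?case by simp
next
  case (Suc N)
  let ?S = "\<Sum>n\<le>N. gw_size_prob p n"
  have S: "0 \<le> ?S" "?S \<le> 1" using Suc.IH by (auto intro!: sum_nonneg gw_size_prob_nonneg)
  have "(\<Sum>n\<le>Suc N. gw_size_prob p n) = (\<Sum>m\<le>N. gw_size_prob p (Suc m))"
    by (subst sum.atMost_Suc_shift) simp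
  also have "\<dots> = (\<Sum>m\<le>N. \<Sum>k\<le>N. pmf p k * forest_prob p k m)"
    unfolding gw_size_prob_Suc
    by (intro sum.cong refl sum.mono_neutral_left) (auto simp: forest_prob_eq_0)
  also have "\<dots> = (\<Sum>k\<le>N. pmf p k * (\<Sum>m\<le>N. forest_prob p k m))"
    by (subst sum.swap) (simp add: sum_distrib_left)
  also have "\<dots> \<le> (\<Sum>k\<le>N. pmf p k * ?S ^ k)"
    by (intro sum_mono mult_left_mono forest_prob_partial_sum_le) auto
  also have "\<dots> \<le> pgf p ?S"
    using sum_le_suminf[OF sums_summable[OF pgf_sums[of ?S p]], of "{..N}"] S
    by (auto simp: sums_iff[THEN iffD1, OF pgf_sums[of ?S p]])
  also have "\<dots> \<le> 1" using pgf_le_1 S by blast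
  finally show ?case .
qed

lemma summable_gw_size_prob: "summable (gw_size_prob p)"
  by (rule bounded_imp_summable[OF gw_size_prob_nonneg gw_size_prob_partial_sum_le_1])

lemma suminf_gw_size_prob_le_1: "suminf (gw_size_prob p) \<le> 1"
proof (rule suminf_le_const[OF summable_gw_size_prob])
  fix n
  have "(\<Sum>i<n. gw_size_prob p i) \<le> (\<Sum>i\<le>n. gw_size_prob p i)"
    by (rule sum_mono2) (auto simp: gw_size_prob_nonneg)
  then show "(\<Sum>i<n. gw_size_prob p i) \<le> 1" using gw_size_prob_partial_sum_le_1[of p n] by linarith
qed

definition size_gf :: "nat pmf \<Rightarrow> real \<Rightarrow> real" where
  "size_gf p z = (\<Sum>n. gw_size_prob p n * z ^ n)"

lemma size_gf_sums:
  assumes "\<bar>z\<bar> \<le> 1"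
  shows "(\<lambda>n. gw_size_prob p n * z ^ n) sums size_gf p z"
proof -
  have "summable (\<lambda>n. gw_size_prob p n * z ^ n)"
  proof (rule summable_comparison_test'[OF summable_gw_size_prob, of 0])
    show "norm (gw_size_prob p n * z ^ n) \<le> gw_size_prob p n" for n
      using assms gw_size_prob_nonneg[of p n] power_le_one[of "\<bar>z\<bar>" n]
      by (simp add: abs_mult power_abs mult_left_le)
  qed
  then show ?thesis unfolding size_gf_def by (simp add: summable_sums)
qed

lemma size_gf_nonneg: "0 \<le> z \<Longrightarrow> z \<le> 1 \<Longrightarrow> 0 \<le> size_gf p z"
  by (rule sums_le[OF _ sums_zero size_gf_sums]) (auto intro!: mult_nonneg_nonneg gw_size_prob_nonneg)

lemma size_gf_le:
  assumes "0 \<le> z" "z \<le> 1"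
  shows "size_gf p z \<le> z"
proof -
  have le: "gw_size_prob p n * z ^ n \<le> z * gw_size_prob p n" for n
  proof (cases n)
    case (Suc m)
    then have "z ^ n \<le> z" using assms by (simp add: mult_left_le power_le_one)
    then show ?thesis using gw_size_prob_nonneg[of p n] by (metis mult.commute mult_left_mono)
  qed simp
  have "size_gf p z \<le> z * suminf (gw_size_prob p)"
    by (rule sums_le[OF _ size_gf_sums sums_mult[OF summable_sums[OF summable_gw_size_prob]]])
       (use le assms in auto)
  also have "\<dots> \<le> z" using suminf_gw_size_prob_le_1[of p] assms by (simp add: mult_left_le)
  finally show ?thesis .
qed

lemma forest_prob_gf_sums:
  assumes "0 \<le> z" "z \<le> 1"
  shows "(\<lambda>m. forest_prob p k m * z ^ m) sums size_gf p z ^ k"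
proof (induction k)
  case 0
  have "(\<lambda>m. forest_prob p 0 m * z ^ m) = (\<lambda>m. if m = 0 then 1 else 0)"
    by (auto simp: forest_prob_0 fun_eq_iff)
  then show ?case using sums_single[of 0 "\<lambda>_. 1::real"] by simp
next
  case (Suc k)
  have a: "summable (\<lambda>n. norm (gw_size_prob p n * z ^ n))"
    using sums_summable[OF size_gf_sums[of z p]] assms by (simp add: abs_mult gw_size_prob_nonneg)
  have b: "summable (\<lambda>n. norm (forest_prob p k n * z ^ n))"
    using sums_summable[OF Suc.IH] assms by (simp add: abs_mult forest_prob_nonneg)
  have "(\<lambda>m. \<Sum>j\<le>m. (gw_size_prob p j * z ^ j) * (forest_prob p k (m - j) * z ^ (m - j)))
          sums (size_gf p z * size_gf p z ^ k)"
    using Cauchy_product_sums[OF a b] sums_unique[OF Suc.IH] sums_unique[OF size_gf_sums[of z p]] assms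
    by simp
  moreover have "(\<Sum>j\<le>m. (gw_size_prob p j * z ^ j) * (forest_prob p k (m - j) * z ^ (m - j)))
                 = forest_prob p (Suc k) m * z ^ m" for m
  proof -
    have "(\<Sum>j\<le>m. (gw_size_prob p j * z ^ j) * (forest_prob p k (m - j) * z ^ (m - j)))
          = (\<Sum>j\<le>m. (gw_size_prob p j * forest_prob p k (m - j)) * z ^ m)"
      by (intro sum.cong refl) (auto simp: power_add[symmetric])
    then show ?thesis by (simp add: forest_prob_Suc sum_distrib_right)
  qed
  ultimately show ?case by simp
qed

lemma size_gf_fixed_point:
  assumes "0 \<le> z" "z \<le> 1"
  shows "size_gf p z = z * pgf p (size_gf p z)"
proof -
  let ?F = "size_gf p z"
  have F: "\<bar>?F\<bar> \<le> 1"
    using size_gf_nonneg[OF assms, of p] size_gf_le[OF assms, of p] assms by (simp add: abs_le_iff)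
  define g where "g k m = pmf p k * (forest_prob p k m * z ^ m)" for k m
  have "(\<lambda>m. \<Sum>k. g k m) sums pgf p ?F"
  proof (rule sums_swap_nonneg)
    show "0 \<le> g k m" for k m
      unfolding g_def using assms by (auto intro!: mult_nonneg_nonneg forest_prob_nonneg)
    show "(\<lambda>m. g k m) sums (pmf p k * ?F ^ k)" for k
      unfolding g_def by (rule sums_mult[OF forest_prob_gf_sums[OF assms]])
    show "(\<lambda>k. pmf p k * ?F ^ k) sums pgf p ?F" by (rule pgf_sums[OF F])
  qed
  moreover have "(\<Sum>k. g k m) = gw_size_prob p (Suc m) * z ^ m" for m
  proof -
    have "(\<Sum>k. g k m) = (\<Sum>k\<le>m. g k m)"
      by (rule suminf_finite) (auto simp: g_def forest_prob_eq_0)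
    then show ?thesis unfolding g_def gw_size_prob_Suc by (simp add: sum_distrib_right mult.assoc)
  qed
  ultimately have "(\<lambda>m. z * (gw_size_prob p (Suc m) * z ^ m)) sums (z * pgf p ?F)"
    using sums_mult by simp
  then have "(\<lambda>m. gw_size_prob p (Suc m) * z ^ Suc m) sums (z * pgf p ?F)"
    by (simp add: algebra_simps)
  then have "(\<lambda>n. gw_size_prob p n * z ^ n) sums (z * pgf p ?F)"
    using sums_Suc_iff[of "\<lambda>n. gw_size_prob p n * z ^ n" "z * pgf p ?F"] by simp
  then show ?thesis using size_gf_sums[of z p] assms sums_unique2 by auto
qed

text \<open>By convexity of \<open>\<Phi>\<close>, once the graph of \<open>t \<mapsto> z \<Phi>(t)\<close> is at or below the diagonal it
  stays strictly below it up to \<open>1\<close>.\<close>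
lemma pgf_scaled_below_diagonal:
  assumes z: "0 < z" "z < 1" and ab: "0 \<le> a" "a < b" "b < 1" and a: "z * pgf p a \<le> a"
  shows "z * pgf p b < b"
proof -
  define t where "t = (b - a) / (1 - a)"
  have t: "0 < t" "t < 1" using ab unfolding t_def by (auto simp: field_simps)
  have "t * (1 - a) = b - a" unfolding t_def using ab by simp
  then have b_eq: "b = (1 - t) * a + t" by (simp add: algebra_simps)
  have "pgf p b \<le> (1 - t) * pgf p a + t"
    unfolding b_eq by (rule pgf_convex) (use ab t in auto)
  then have "z * pgf p b \<le> z * ((1 - t) * pgf p a + t)" using z by (simp add: mult_left_mono)
  also have "\<dots> = (1 - t) * (z * pgf p a) + t * z" by (simp add: algebra_simps)
  also have "\<dots> \<le> (1 - t) * a + t * z" using a t by (simp add: mult_left_mono)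
  also have "\<dots> < b" using t z b_eq by simp
  finally show ?thesis .
qed

lemma size_gf_lt_1: "0 \<le> z \<Longrightarrow> z < 1 \<Longrightarrow> size_gf p z < 1"
  using size_gf_le[of z p] by simp

lemma size_gf_unique_fixed_point:
  assumes z: "0 < z" "z < 1" and y: "0 \<le> y" "y < 1" "y = z * pgf p y"
  shows "size_gf p z = y"
proof -
  let ?F = "size_gf p z"
  have F: "0 \<le> ?F" "?F < 1" "?F = z * pgf p ?F"
    using size_gf_nonneg size_gf_lt_1 size_gf_fixed_point z by auto
  show ?thesis
  proof (rule ccontr)
    assume "?F \<noteq> y"
    then consider "?F < y" | "y < ?F" by linarith
    then show False
    proof cases
      case 1 then show False using pgf_scaled_below_diagonal[OF z F(1) 1 y(2), of p] F y by linarith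
    next
      case 2 then show False using pgf_scaled_below_diagonal[OF z y(1) 2 F(2), of p] F y by linarith
    qed
  qed
qed

lemma size_gf_mono_pgf:
  assumes z: "0 < z" "z < 1" and le: "\<forall>t\<in>{0<..<1}. pgf p1 t \<le> pgf p2 t"
  shows "size_gf p1 z \<le> size_gf p2 z"
proof (rule ccontr)
  let ?F1 = "size_gf p1 z" and ?F2 = "size_gf p2 z"
  assume "\<not> ?F1 \<le> ?F2"
  then have lt: "?F2 < ?F1" by simp
  have F1: "0 \<le> ?F1" "?F1 < 1" "?F1 = z * pgf p1 ?F1"
    using size_gf_nonneg size_gf_lt_1 size_gf_fixed_point z by auto
  have F2: "0 \<le> ?F2" "?F2 < 1" "?F2 = z * pgf p2 ?F2"
    using size_gf_nonneg size_gf_lt_1 size_gf_fixed_point z by auto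
  have "z * pgf p2 ?F1 < ?F1" using pgf_scaled_below_diagonal[OF z F2(1) lt F1(2), of p2] F2 by linarith
  moreover have "pgf p1 ?F1 \<le> pgf p2 ?F1" using le lt F1 F2 by auto
  ultimately show False using F1 z by (smt (verit) mult_left_mono)
qed

text \<open>The quadratic lower bound on \<open>\<Phi>\<close> near \<open>1\<close> turns the fixed-point equation into
  \<open>1 - F(z) = O(\<surd>(1 - z))\<close>.\<close>
lemma size_gf_sqrt_bound:
  assumes p: "critical_finite_var p" and z: "0 < z" "z < 1"
  shows "branch_prob p * (1 - size_gf p z)^2 \<le> 1 - z"
proof -
  let ?F = "size_gf p z"
  have F: "0 \<le> ?F" "?F < 1" "?F = z * pgf p ?F"
    using size_gf_nonneg size_gf_lt_1 size_gf_fixed_point z by auto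
  have "(1 - z) * pgf p ?F = pgf p ?F - ?F" using F(3) by (simp add: algebra_simps)
  then have "branch_prob p * (1 - ?F)^2 \<le> (1 - z) * pgf p ?F"
    using pgf_one_minus_ge[OF p, of "1 - ?F"] F by simp
  also have "\<dots> \<le> 1 - z" using pgf_le_1[of ?F p] F z by (simp add: mult_left_le)
  finally show ?thesis .
qed

text \<open>A total mass \<open>S < 1\<close> would give \<open>F \<le> S\<close> on \<open>[0,1)\<close>, whereas the square-root bound
  forces \<open>F(z) \<rightarrow> 1\<close>.\<close>
lemma gw_size_prob_sums_1:
  assumes p: "critical_finite_var p"
  shows "gw_size_prob p sums 1"
proof -
  let ?S = "suminf (gw_size_prob p)"
  have c: "0 < branch_prob p" "branch_prob p \<le> 1"
    using branch_prob_pos[OF p] pmf_nonneg[of p 0] pmf_nonneg[of p 1] unfolding branch_prob_def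
    by linarith+
  have S0: "0 \<le> ?S" by (rule suminf_nonneg[OF summable_gw_size_prob gw_size_prob_nonneg])
  have "?S \<ge> 1"
  proof (rule ccontr)
    assume S1: "\<not> ?S \<ge> 1"
    define x where "x = 1/2 - ?S / 2"
    have x: "0 < x" "x \<le> 1/2" using S0 S1 unfolding x_def by auto
    define z where "z = 1 - branch_prob p * x^2"
    have "x^2 \<le> 1/4" using x power_mono[of x "1/2" 2] by (simp add: power2_eq_square)
    then have "0 < branch_prob p * x^2" "branch_prob p * x^2 \<le> 1/4"
      using c x mult_mono[of "branch_prob p" 1 "x^2" "1/4"] by auto
    then have z: "0 < z" "z < 1" unfolding z_def by linarith+
    have "branch_prob p * (1 - size_gf p z)^2 \<le> branch_prob p * x^2"
      using size_gf_sqrt_bound[OF p z] unfolding z_def by simp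
    then have "(1 - size_gf p z)^2 \<le> x^2" using c by simp
    then have "1 - size_gf p z \<le> x" by (rule power2_le_imp_le) (use x in simp)
    moreover have "size_gf p z \<le> ?S"
    proof (rule sums_le[OF _ size_gf_sums summable_sums[OF summable_gw_size_prob]])
      show "gw_size_prob p n * z ^ n \<le> gw_size_prob p n" for n
        using gw_size_prob_nonneg[of p n] power_le_one[of z n] z by (simp add: mult_left_le)
    qed (use z in simp)
    ultimately show False unfolding x_def using S1 by linarith
  qed
  then have "?S = 1" using suminf_gw_size_prob_le_1[of p] by simp
  then show ?thesis using summable_sums[OF summable_gw_size_prob[of p]] by simp
qed

lemma isCont_size_gf: "\<bar>z\<bar> < 1 \<Longrightarrow> isCont (size_gf p) z"
  unfolding size_gf_def[abs_def]
  by (rule isCont_powser[where K=1]) (use summable_gw_size_prob in auto)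

text \<open>At \<open>z\<^sub>0 = t\<^sub>0 / \<Phi>\<^sub>2(t\<^sub>0)\<close>, where \<open>t\<^sub>0\<close> witnesses \<open>\<Phi>\<^sub>1 < \<Phi>\<^sub>2\<close>, the fixed point of
  \<open>z\<^sub>0 \<Phi>\<^sub>2\<close> is \<open>t\<^sub>0\<close> itself, while \<open>t\<^sub>0\<close> is not a fixed point of \<open>z\<^sub>0 \<Phi>\<^sub>1\<close>.\<close>
lemma size_gf_strict_mono_pgf:
  assumes p1: "critical_finite_var p1"
    and le: "\<forall>t\<in>{0<..<1}. pgf p1 t \<le> pgf p2 t"
    and lt: "\<exists>t\<in>{0<..<1}. pgf p1 t < pgf p2 t"
  shows "\<exists>a b. 0 < a \<and> a < b \<and> b < 1 \<and> (\<forall>z\<in>{a<..<b}. size_gf p1 z < size_gf p2 z)"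
proof -
  obtain t0 where t0: "0 < t0" "t0 < 1" "pgf p1 t0 < pgf p2 t0" using lt by auto
  have "pgf p2 t0 > t0" using pgf_ge_self[OF p1, of t0] t0 by simp
  define z0 where "z0 = t0 / pgf p2 t0"
  have z0: "0 < z0" "z0 < 1" "t0 = z0 * pgf p2 t0"
    using \<open>pgf p2 t0 > t0\<close> t0 unfolding z0_def by (auto simp: field_simps)
  have F2: "size_gf p2 z0 = t0"
    by (rule size_gf_unique_fixed_point[OF z0(1,2)]) (use t0 z0 in auto)
  have "size_gf p1 z0 \<noteq> t0"
  proof
    assume "size_gf p1 z0 = t0"
    then have "t0 = z0 * pgf p1 t0" using size_gf_fixed_point[of z0 p1] z0 by simp
    also have "\<dots> < z0 * pgf p2 t0" using z0(1) t0(3) by simp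
    finally show False using z0 by simp
  qed
  then have "0 < size_gf p2 z0 - size_gf p1 z0"
    using size_gf_mono_pgf[OF z0(1,2) le] F2 by simp
  moreover have "isCont (\<lambda>z. size_gf p2 z - size_gf p1 z) z0"
    using z0 by (intro continuous_intros isCont_size_gf) auto
  ultimately have "\<forall>\<^sub>F z in at z0. 0 < size_gf p2 z - size_gf p1 z"
    unfolding isCont_def by (rule order_tendstoD(1)[rotated])
  then obtain d where d: "d > 0" "\<And>z. z \<noteq> z0 \<Longrightarrow> dist z z0 < d \<Longrightarrow> 0 < size_gf p2 z - size_gf p1 z"
    unfolding eventually_at by auto
  show ?thesis
  proof (intro exI conjI ballI)
    let ?b = "(z0 + min (z0 + d) 1) / 2"
    show "0 < z0" "z0 < ?b" "?b < 1" using z0 d by auto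
    fix z assume "z \<in> {z0<..<?b}"
    then show "size_gf p1 z < size_gf p2 z" using d(2)[of z] by (auto simp: dist_real_def)
  qed
qed

lemma size_gf_exp_strict_mono_pgf:
  assumes p1: "critical_finite_var p1"
    and le: "\<forall>t\<in>{0<..<1}. pgf p1 t \<le> pgf p2 t"
    and lt: "\<exists>t\<in>{0<..<1}. pgf p1 t < pgf p2 t"
  obtains l u where "0 < l" "l < u" "\<And>x. x \<in> {l<..<u} \<Longrightarrow> size_gf p1 (exp (-x)) < size_gf p2 (exp (-x))"
proof -
  obtain a b where ab: "0 < a" "a < b" "b < 1" "\<forall>z\<in>{a<..<b}. size_gf p1 z < size_gf p2 z"
    using size_gf_strict_mono_pgf[OF p1 le lt] by blast
  have "exp (-x) \<in> {a<..<b}" if "x \<in> {- ln b<..<- ln a}" for x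
    using that ab exp_less_mono[of "ln a" "-x"] exp_less_mono[of "-x" "ln b"] by auto
  then show ?thesis using ab by (intro that[of "- ln b" "- ln a"]) auto
qed

section \<open>Integral representations of powers and logarithms\<close>

lemma nn_integral_gamma_kernel:
  assumes s: "s > 0" and t: "t > 0"
  shows "(\<integral>\<^sup>+x. ennreal (indicator {0..} x * x powr (s - 1) / exp (t * x)) \<partial>lborel)
         = ennreal (Gamma s / t powr s)"
proof -
  let ?f = "\<lambda>u::real. ennreal (indicator {0..} u * u powr (s - 1) / exp u)"
  let ?I = "\<integral>\<^sup>+x. ennreal (indicator {0..} x * x powr (s - 1) / exp (t * x)) \<partial>lborel"
  have scale: "?f (0 + t * x)
        = ennreal (t powr (s - 1)) * ennreal (indicator {0..} x * x powr (s - 1) / exp (t * x))" for x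
  proof (cases "x \<ge> 0")
    case True
    then have "(t * x) powr (s - 1) = t powr (s - 1) * x powr (s - 1)" using t by (simp add: powr_mult)
    then show ?thesis using True t by (simp add: ennreal_mult'[symmetric] indicator_def)
  next
    case False
    then have "\<not> 0 \<le> t * x" using t by (simp add: zero_le_mult_iff)
    then show ?thesis using False by (simp add: indicator_def)
  qed
  have "ennreal (Gamma s) = (\<integral>\<^sup>+u. ?f u \<partial>lborel)"
    using Gamma_conv_nn_integral_real[OF s] by simp
  also have "\<dots> = ennreal t * (\<integral>\<^sup>+x. ?f (0 + t * x) \<partial>lborel)"
    using nn_integral_real_affine[of ?f t 0] t by simp
  also have "\<dots> = ennreal (t * t powr (s - 1)) * ?I"
    unfolding scale using t by (subst nn_integral_cmult) (auto simp: ennreal_mult mult.assoc)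
  also have "t * t powr (s - 1) = t powr s" using t by (simp add: powr_diff)
  finally have "ennreal (Gamma s) = ennreal (t powr s) * ?I" .
  moreover have "t powr s > 0" using t by simp
  ultimately have "ennreal (Gamma s) / ennreal (t powr s) = ?I"
    by (metis ennreal_eq_0_iff ennreal_mult_divide_eq ennreal_neq_top leD mult.commute)
  then show ?thesis
    using Gamma_real_pos[OF s] \<open>t powr s > 0\<close> by (simp add: divide_ennreal)
qed

lemma nn_integral_exp_interval:
  assumes x: "x > 0" and ab: "a \<le> b"
  shows "(\<integral>\<^sup>+t. ennreal (indicator {a<..b} t / exp (t * x)) \<partial>lborel)
         = ennreal ((exp (-(a*x)) - exp (-(b*x))) / x)"
proof -
  have "((\<lambda>t. 1 / exp (t * x)) has_integral ((- exp (-(b*x)) / x) - (- exp (-(a*x)) / x))) {a..b}"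
  proof (rule fundamental_theorem_of_calculus[OF ab])
    fix t assume "t \<in> {a..b}"
    have "((\<lambda>t. - exp (-(t*x)) / x) has_real_derivative (exp (-(t*x)) * x / x)) (at t within {a..b})"
      using x by (auto intro!: derivative_eq_intros simp: field_simps)
    then show "((\<lambda>t. - exp (-(t*x)) / x) has_vector_derivative 1 / exp (t * x)) (at t within {a..b})"
      using x by (simp add: has_real_derivative_iff_has_vector_derivative exp_minus field_simps)
  qed
  then have "(\<integral>\<^sup>+t. ennreal (1 / exp (t * x)) * indicator {a..b} t \<partial>lborel)
             = ennreal ((exp (-(a*x)) - exp (-(b*x))) / x)"
    by (subst nn_integral_has_integral_lebesgue') (auto simp: diff_divide_distrib)
  moreover have "(\<integral>\<^sup>+t. ennreal (indicator {a<..b} t / exp (t * x)) \<partial>lborel)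
                 = (\<integral>\<^sup>+t. ennreal (1 / exp (t * x)) * indicator {a..b} t \<partial>lborel)"
    by (rule nn_integral_cong_AE, use AE_lborel_singleton[of a] in eventually_elim)
       (auto simp: indicator_def)
  ultimately show ?thesis by simp
qed

text \<open>A Frullani-type identity: write \<open>(e\<^sup>-\<^sup>a\<^sup>x - e\<^sup>-\<^sup>b\<^sup>x) / x\<close> as \<open>\<integral>\<^sub>a\<^sup>b e\<^sup>-\<^sup>t\<^sup>x dt\<close> and swap the
  integrals (Tonelli), then integrate out \<open>x\<close> with the Gamma kernel.\<close>
lemma nn_integral_powr_exp_diff:
  assumes s: "s > 0" and ab: "0 \<le> a" "a \<le> b"
  shows "(\<integral>\<^sup>+x. ennreal (indicator {0<..} x * x powr (s - 1) * ((exp (-(a*x)) - exp (-(b*x))) / x)) \<partial>lborel)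
       = (\<integral>\<^sup>+t. ennreal (indicator {a<..b} t * (Gamma s / t powr s)) \<partial>lborel)"
proof -
  define g where
    "g = (\<lambda>(x::real, t::real). ennreal (indicator {a<..b} t * (indicator {0..} x * x powr (s - 1) / exp (t * x))))"
  have g_meas: "g \<in> borel_measurable (lborel \<Otimes>\<^sub>M lborel)"
    unfolding g_def by measurable
  have inner_x: "ennreal (indicator {a<..b} t * (Gamma s / t powr s)) = (\<integral>\<^sup>+x. g (x, t) \<partial>lborel)" for t
  proof (cases "t \<in> {a<..b}")
    case True
    then have "t > 0" using ab by auto
    then show ?thesis using True nn_integral_gamma_kernel[OF s] by (simp add: g_def)
  qed (simp add: g_def)
  have inner_t: "(\<integral>\<^sup>+t. g (x, t) \<partial>lborel)
       = ennreal (indicator {0<..} x * x powr (s - 1) * ((exp (-(a*x)) - exp (-(b*x))) / x))" for x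
  proof (cases "x > 0")
    case True
    have "(\<integral>\<^sup>+t. g (x, t) \<partial>lborel)
          = (\<integral>\<^sup>+t. ennreal (x powr (s - 1)) * ennreal (indicator {a<..b} t / exp (t * x)) \<partial>lborel)"
      using True by (intro nn_integral_cong) (auto simp: g_def indicator_def ennreal_mult'[symmetric])
    also have "\<dots> = ennreal (x powr (s - 1)) * ennreal ((exp (-(a*x)) - exp (-(b*x))) / x)"
      by (subst nn_integral_cmult) (auto simp: nn_integral_exp_interval[OF True ab(2)])
    finally show ?thesis using True by (simp add: ennreal_mult'[symmetric])
  next
    case False
    then have "g (x, t) = 0" for t by (cases "x = 0") (auto simp: g_def indicator_def)
    then show ?thesis using False by simp
  qed
  show ?thesis
    unfolding inner_x inner_t[symmetric] by (rule lborel_pair.Fubini[OF g_meas, symmetric])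
qed

lemma nn_integral_powr_exp_pow:
  assumes "\<beta> > 0" "n \<ge> 1"
  shows "(\<integral>\<^sup>+x. ennreal (indicator {0..} x * x powr (\<beta> - 1) * exp (-x) ^ n) \<partial>lborel)
         = ennreal (Gamma \<beta> * real n powr (-\<beta>))"
proof -
  have "exp (-x) ^ n = 1 / exp (real n * x)" for x
    by (simp add: exp_of_nat_mult[symmetric] exp_minus field_simps)
  then show ?thesis
    using nn_integral_gamma_kernel[OF assms(1), of "real n"] assms
    by (simp add: powr_minus divide_inverse mult.commute)
qed

lemma nn_integral_powr_one_minus_exp_pow:
  assumes \<alpha>: "0 < \<alpha>" "\<alpha> < 1"
  shows "(\<integral>\<^sup>+x. ennreal (indicator {0<..} x * x powr (-\<alpha> - 1) * (1 - exp (-x) ^ n)) \<partial>lborel)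
         = ennreal (Gamma (1 - \<alpha>) / \<alpha> * real n powr \<alpha>)"
proof -
  let ?s = "1 - \<alpha>"
  have s: "?s > 0" using \<alpha> by simp
  have "indicator {0<..} x * x powr (-\<alpha> - 1) * (1 - exp (-x) ^ n)
        = indicator {0<..} x * x powr (?s - 1) * ((exp (-(0*x)) - exp (-(real n*x))) / x)" for x :: real
    by (cases "x > 0")
       (auto simp: powr_diff powr_minus exp_of_nat_mult[symmetric] field_simps)
  then have "(\<integral>\<^sup>+x. ennreal (indicator {0<..} x * x powr (-\<alpha> - 1) * (1 - exp (-x) ^ n)) \<partial>lborel)
             = (\<integral>\<^sup>+t. ennreal (indicator {0<..real n} t * (Gamma ?s / t powr ?s)) \<partial>lborel)"
    using nn_integral_powr_exp_diff[OF s, of 0 "real n"] by simp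
  also have "\<dots> = (\<integral>\<^sup>+t. ennreal (Gamma ?s * t powr (\<alpha> - 1)) * indicator {0..real n} t \<partial>lborel)"
    by (rule nn_integral_cong_AE, use AE_lborel_singleton[of 0] in eventually_elim)
       (auto simp: indicator_def powr_minus[symmetric] divide_inverse powr_diff mult_ac)
  also have "\<dots> = ennreal (Gamma ?s * (real n powr (\<alpha> - 1 + 1) / (\<alpha> - 1 + 1)))"
    by (rule nn_integral_has_integral_lebesgue')
       (use s \<alpha> has_integral_mult_right[OF has_integral_powr_from_0[of "\<alpha> - 1" "real n"], of "Gamma ?s"]
        in \<open>auto intro!: mult_nonneg_nonneg less_imp_le[OF Gamma_real_pos]\<close>)
  finally show ?thesis by simp
qed

lemma nn_integral_exp_minus_exp_pow:
  assumes "n \<ge> 1"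
  shows "(\<integral>\<^sup>+x. ennreal (indicator {0<..} x / x * (exp (-x) - exp (-x) ^ n)) \<partial>lborel)
         = ennreal (ln (real n))"
proof -
  have n: "real n \<ge> 1" using assms by simp
  have "((\<lambda>t. 1 / t) has_integral (ln (real n) - ln 1)) {1..real n}"
  proof (rule fundamental_theorem_of_calculus[OF n])
    fix t assume "t \<in> {1..real n}"
    then have "(ln has_real_derivative 1 / t) (at t within {1..real n})"
      by (auto intro!: derivative_eq_intros)
    then show "(ln has_vector_derivative 1 / t) (at t within {1..real n})"
      by (simp add: has_real_derivative_iff_has_vector_derivative)
  qed
  then have ln: "(\<integral>\<^sup>+t. ennreal (1 / t) * indicator {1..real n} t \<partial>lborel) = ennreal (ln (real n))"
    by (subst nn_integral_has_integral_lebesgue') auto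
  have "(\<integral>\<^sup>+x. ennreal (indicator {0<..} x / x * (exp (-x) - exp (-x) ^ n)) \<partial>lborel)
        = (\<integral>\<^sup>+x. ennreal (indicator {0<..} x * x powr (1 - 1) * ((exp (-(1*x)) - exp (-(real n*x))) / x)) \<partial>lborel)"
    by (intro nn_integral_cong arg_cong[where f = ennreal])
       (auto simp: indicator_def exp_of_nat_mult[symmetric] field_simps)
  also have "\<dots> = (\<integral>\<^sup>+t. ennreal (indicator {1<..real n} t * (Gamma 1 / t powr 1)) \<partial>lborel)"
    by (rule nn_integral_powr_exp_diff) (use n in auto)
  also have "\<dots> = (\<integral>\<^sup>+t. ennreal (1 / t) * indicator {1..real n} t \<partial>lborel)"
    by (rule nn_integral_cong_AE, use AE_lborel_singleton[of 1] in eventually_elim)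
       (auto simp: indicator_def)
  finally show ?thesis using ln by simp
qed

section \<open>Comparison of moment series\<close>

lemma suminf_ennreal_as_nn_integral:
  fixes K :: "real \<Rightarrow> nat \<Rightarrow> real" and a \<phi> :: "nat \<Rightarrow> real"
  assumes K_meas: "\<And>n. (\<lambda>x. K x n) \<in> borel_measurable borel"
    and K_nonneg: "\<And>x n. 1 \<le> n \<Longrightarrow> 0 \<le> K x n"
    and K_int: "\<And>n. 1 \<le> n \<Longrightarrow> (\<integral>\<^sup>+x. ennreal (K x n) \<partial>lborel) = ennreal (C * \<phi> n)"
    and C: "0 \<le> C" and \<phi>: "\<And>n. 0 \<le> \<phi> n" and a: "\<And>n. 0 \<le> a n" "a 0 = 0"
    and G: "\<And>x. (\<lambda>n. a n * K x n) sums G x"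
  shows "ennreal C * (\<Sum>n. ennreal (a n * \<phi> n)) = (\<integral>\<^sup>+x. ennreal (G x) \<partial>lborel)"
proof -
  have term_nonneg: "0 \<le> a n * K x n" for x n
    using a K_nonneg by (cases "n = 0") auto
  have term_int: "ennreal C * ennreal (a n * \<phi> n) = (\<integral>\<^sup>+x. ennreal (a n * K x n) \<partial>lborel)" for n
  proof (cases "n = 0")
    case False
    then have "ennreal C * ennreal (a n * \<phi> n) = ennreal (a n) * (\<integral>\<^sup>+x. ennreal (K x n) \<partial>lborel)"
      using K_int[of n] C \<phi>[of n] a(1)[of n] by (simp add: ennreal_mult'[symmetric] mult_ac)
    also have "\<dots> = (\<integral>\<^sup>+x. ennreal (a n) * ennreal (K x n) \<partial>lborel)"
      by (rule nn_integral_cmult[symmetric]) (use K_meas in simp)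
    also have "\<dots> = (\<integral>\<^sup>+x. ennreal (a n * K x n) \<partial>lborel)"
      using a(1)[of n] by (simp add: ennreal_mult')
    finally show ?thesis .
  qed (simp add: a(2))
  have "ennreal C * (\<Sum>n. ennreal (a n * \<phi> n)) = (\<Sum>n. \<integral>\<^sup>+x. ennreal (a n * K x n) \<partial>lborel)"
    by (simp add: term_int[symmetric])
  also have "\<dots> = (\<integral>\<^sup>+x. (\<Sum>n. ennreal (a n * K x n)) \<partial>lborel)"
    by (rule nn_integral_suminf[symmetric]) (use K_meas in simp)
  also have "\<dots> = (\<integral>\<^sup>+x. ennreal (G x) \<partial>lborel)"
    using suminf_ennreal2[OF term_nonneg sums_summable[OF G]] sums_unique[OF G] by simp
  finally show ?thesis .
qed

lemma nn_integral_strict_mono_on_interval: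
  fixes f g :: "real \<Rightarrow> real"
  assumes meas: "f \<in> borel_measurable borel" "g \<in> borel_measurable borel"
    and f_nonneg: "\<And>x. 0 \<le> f x" and le: "\<And>x. f x \<le> g x"
    and lu: "l < u" and less: "\<And>x. x \<in> {l<..<u} \<Longrightarrow> f x < g x"
    and finite: "(\<integral>\<^sup>+x. ennreal (g x) \<partial>lborel) \<noteq> \<infinity>"
  shows "(\<integral>\<^sup>+x. ennreal (f x) \<partial>lborel) < (\<integral>\<^sup>+x. ennreal (g x) \<partial>lborel)"
proof (rule nn_integral_less)
  show "(\<lambda>x. ennreal (f x)) \<in> borel_measurable lborel" "(\<lambda>x. ennreal (g x)) \<in> borel_measurable lborel"
    using meas by measurable
  have "(\<integral>\<^sup>+x. ennreal (f x) \<partial>lborel) \<le> (\<integral>\<^sup>+x. ennreal (g x) \<partial>lborel)"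
    by (intro nn_integral_mono ennreal_leI le)
  then show "(\<integral>\<^sup>+x. ennreal (f x) \<partial>lborel) \<noteq> \<infinity>" using finite by (auto simp: top_unique)
  show "AE x in lborel. ennreal (f x) \<le> ennreal (g x)" by (intro AE_I2 ennreal_leI le)
  show "\<not> (AE x in lborel. ennreal (g x) \<le> ennreal (f x))"
  proof
    assume "AE x in lborel. ennreal (g x) \<le> ennreal (f x)"
    then have "AE x in lborel. x \<notin> {l<..<u}"
    proof eventually_elim
      case (elim x)
      show ?case
      proof
        assume "x \<in> {l<..<u}"
        then have "ennreal (f x) < ennreal (g x)" using less f_nonneg by (simp add: ennreal_less_iff)
        with elim show False by simp
      qed
    qed
    then obtain N where N: "{x \<in> space lborel. \<not> x \<notin> {l<..<u}} \<subseteq> N" "emeasure lborel N = 0" "N \<in> sets lborel"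
      by (rule AE_E)
    have "emeasure lborel {l<..<u} \<le> emeasure lborel N" using N by (intro emeasure_mono) auto
    then show False using N lu by simp
  qed
qed

lemma suminf_less_by_kernel:
  fixes K :: "real \<Rightarrow> nat \<Rightarrow> real" and a b \<phi> :: "nat \<Rightarrow> real"
  assumes K_meas: "\<And>n. (\<lambda>x. K x n) \<in> borel_measurable borel"
    and K_nonneg: "\<And>x n. 1 \<le> n \<Longrightarrow> 0 \<le> K x n"
    and K_int: "\<And>n. 1 \<le> n \<Longrightarrow> (\<integral>\<^sup>+x. ennreal (K x n) \<partial>lborel) = ennreal (C * \<phi> n)"
    and C: "0 < C" and \<phi>: "\<And>n. 0 \<le> \<phi> n"
    and a: "\<And>n. 0 \<le> a n" "a 0 = 0" and b: "\<And>n. 0 \<le> b n" "b 0 = 0"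
    and Ga: "\<And>x. (\<lambda>n. a n * K x n) sums Ga x" and Gb: "\<And>x. (\<lambda>n. b n * K x n) sums Gb x"
    and le: "\<And>x. Ga x \<le> Gb x"
    and lu: "l < u" and less: "\<And>x. x \<in> {l<..<u} \<Longrightarrow> Ga x < Gb x"
    and finite: "(\<integral>\<^sup>+x. ennreal (Gb x) \<partial>lborel) \<noteq> \<infinity>"
  shows "(\<Sum>n. a n * \<phi> n) < (\<Sum>n. b n * \<phi> n)"
proof -
  have meas: "G \<in> borel_measurable borel" if "\<And>x. (\<lambda>n. c n * K x n) sums G x" for c G
  proof -
    have "G = (\<lambda>x. \<Sum>n. c n * K x n)" using that sums_unique by (auto simp: fun_eq_iff)
    moreover have "(\<lambda>x. \<Sum>n. c n * K x n) \<in> borel_measurable borel" using K_meas by measurable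
    ultimately show ?thesis by simp
  qed
  have "0 \<le> a n * K x n" for n x using a K_nonneg by (cases "n = 0") auto
  then have Ga_nonneg: "0 \<le> Ga x" for x by (rule sums_le[OF _ sums_zero Ga])
  define Sa where "Sa = (\<Sum>n. ennreal (a n * \<phi> n))"
  define Sb where "Sb = (\<Sum>n. ennreal (b n * \<phi> n))"
  have "ennreal C * Sa < ennreal C * Sb"
    unfolding Sa_def Sb_def
    using suminf_ennreal_as_nn_integral[OF K_meas K_nonneg K_int _ \<phi> a Ga]
      suminf_ennreal_as_nn_integral[OF K_meas K_nonneg K_int _ \<phi> b Gb]
      nn_integral_strict_mono_on_interval[OF meas[OF Ga] meas[OF Gb] Ga_nonneg le lu less finite] C
    by simp
  then have "Sa < Sb" using mult_left_mono[of Sb Sa "ennreal C"] by (auto simp: not_less[symmetric])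
  moreover have "Sb \<noteq> \<infinity>"
    using suminf_ennreal_as_nn_integral[OF K_meas K_nonneg K_int _ \<phi> b Gb] finite C
    unfolding Sb_def by (auto simp: ennreal_mult_eq_top_iff)
  ultimately have "Sa \<noteq> \<infinity>" by (auto simp: top_unique)
  have a\<phi>: "0 \<le> a n * \<phi> n" and b\<phi>: "0 \<le> b n * \<phi> n" for n using a(1) b(1) \<phi> by simp_all
  have "summable (\<lambda>n. a n * \<phi> n)" "summable (\<lambda>n. b n * \<phi> n)"
    using \<open>Sa \<noteq> \<infinity>\<close> \<open>Sb \<noteq> \<infinity>\<close> unfolding Sa_def Sb_def
    by (auto intro!: summable_suminf_not_top a\<phi> b\<phi>)
  with \<open>Sa < Sb\<close> show ?thesis
    unfolding Sa_def Sb_def using suminf_ennreal2[OF a\<phi>] suminf_ennreal2[OF b\<phi>] suminf_nonneg[OF _ a\<phi>]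
    by (simp add: ennreal_less_iff)
qed

lemma nn_integral_finite_by_powr_bounds:
  fixes G :: "real \<Rightarrow> real"
  assumes a: "-1 < a" and e: "e < -1" and D: "0 \<le> D" "0 \<le> D'"
    and small: "\<And>x. 0 < x \<Longrightarrow> x \<le> 1 \<Longrightarrow> G x \<le> D * x powr a"
    and large: "\<And>x. 1 < x \<Longrightarrow> G x \<le> D' * x powr e"
    and nonpos: "\<And>x. x \<le> 0 \<Longrightarrow> G x \<le> 0"
  shows "(\<integral>\<^sup>+x. ennreal (G x) \<partial>lborel) \<noteq> \<infinity>"
proof -
  let ?g0 = "\<lambda>x. ennreal (D * x powr a) * indicator {0..1} x"
  let ?g1 = "\<lambda>x. ennreal (D' * x powr e) * indicator {1..} x"
  have i0: "(\<integral>\<^sup>+x. ?g0 x \<partial>lborel) = ennreal (D * (1 powr (a + 1) / (a + 1)))"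
    by (rule nn_integral_has_integral_lebesgue')
       (use D a has_integral_mult_right[OF has_integral_powr_from_0[of a 1], of D] in auto)
  have i1: "(\<integral>\<^sup>+x. ?g1 x \<partial>lborel) = ennreal (D' * (-(1 powr (e + 1)) / (e + 1)))"
    by (rule nn_integral_has_integral_lebesgue')
       (use D e has_integral_mult_right[OF has_integral_powr_to_inf[OF e, of 1], of D'] in auto)
  have "(\<integral>\<^sup>+x. ennreal (G x) \<partial>lborel) \<le> (\<integral>\<^sup>+x. ?g0 x + ?g1 x \<partial>lborel)"
  proof (rule nn_integral_mono)
    fix x :: real
    consider "x \<le> 0" | "0 < x" "x \<le> 1" | "1 < x" by linarith
    then show "ennreal (G x) \<le> ?g0 x + ?g1 x"
    proof cases
      case 1 then show ?thesis using nonpos[of x] by (simp add: ennreal_neg)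
    next
      case 2
      then have "ennreal (G x) \<le> ?g0 x" using small[of x] by (auto intro!: ennreal_leI)
      then show ?thesis by (rule order_trans) simp
    next
      case 3
      then have "ennreal (G x) \<le> ?g1 x" using large[of x] by (auto intro!: ennreal_leI)
      then show ?thesis by (rule order_trans) simp
    qed
  qed
  also have "\<dots> = (\<integral>\<^sup>+x. ?g0 x \<partial>lborel) + (\<integral>\<^sup>+x. ?g1 x \<partial>lborel)"
    by (rule nn_integral_add) auto
  also have "\<dots> < \<infinity>" unfolding i0 i1 by simp
  finally show ?thesis by simp
qed

text \<open>For \<open>r = -\<alpha> - 1\<close> the bound is integrable at \<open>0\<close> exactly when \<open>\<alpha> < 1/2\<close>.\<close>
lemma powr_mult_one_minus_size_gf_exp_le:
  assumes p: "critical_finite_var p" and x: "x > 0"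
  shows "x powr r * (1 - size_gf p (exp (-x))) \<le> x powr (r + 1/2) / sqrt (branch_prob p)"
proof -
  let ?F = "size_gf p (exp (-x))"
  have z: "0 < exp (-x)" "exp (-x) < 1" using x by auto
  have c: "branch_prob p > 0" by (rule branch_prob_pos[OF p])
  have "branch_prob p * (1 - ?F)^2 \<le> 1 - exp (-x)" by (rule size_gf_sqrt_bound[OF p z])
  also have "\<dots> \<le> x" using exp_ge_add_one_self[of "-x"] by simp
  finally have "(1 - ?F)^2 \<le> x / branch_prob p" using c by (simp add: field_simps)
  moreover have "0 \<le> 1 - ?F" using size_gf_le[of "exp (-x)" p] z by linarith
  ultimately have "1 - ?F \<le> sqrt x / sqrt (branch_prob p)"
    by (metis real_sqrt_abs real_sqrt_divide real_sqrt_le_mono abs_of_nonneg)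
  moreover have "sqrt x = x powr (1/2)" using x by (simp add: powr_half_sqrt)
  ultimately have "x powr r * (1 - ?F) \<le> x powr r * (x powr (1/2) / sqrt (branch_prob p))"
    by (intro mult_left_mono) auto
  also have "\<dots> = x powr (r + 1/2) / sqrt (branch_prob p)" by (simp add: powr_add)
  finally show ?thesis .
qed

lemma gw_size_series_less_by_laplace:
  fixes w :: "real \<Rightarrow> real" and \<phi> :: "nat \<Rightarrow> real"
  assumes p1: "critical_finite_var p1"
    and le: "\<forall>t\<in>{0<..<1}. pgf p1 t \<le> pgf p2 t" and lt: "\<exists>t\<in>{0<..<1}. pgf p1 t < pgf p2 t"
    and w: "w \<in> borel_measurable borel" "\<And>x. x \<le> 0 \<Longrightarrow> w x = 0" "\<And>x. 0 < x \<Longrightarrow> 0 < w x"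
    and kernel: "\<And>n. 1 \<le> n \<Longrightarrow> (\<integral>\<^sup>+x. ennreal (w x * exp (-x) ^ n) \<partial>lborel) = ennreal (C * \<phi> n)"
    and C: "0 < C" and \<phi>: "\<And>n. 0 \<le> \<phi> n"
  shows "(\<Sum>n. gw_size_prob p1 n * \<phi> n) < (\<Sum>n. gw_size_prob p2 n * \<phi> n)"
proof -
  have w_nonneg: "0 \<le> w x" for x using w(2,3)[of x] by fastforce
  obtain l u where lu: "0 < l" "l < u" "\<And>x. x \<in> {l<..<u} \<Longrightarrow> size_gf p1 (exp (-x)) < size_gf p2 (exp (-x))"
    using size_gf_exp_strict_mono_pgf[OF p1 le lt] by blast
  have sums: "(\<lambda>n. gw_size_prob p n * (w x * exp (-x) ^ n)) sums (w x * size_gf p (exp (-x)))" for p x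
  proof (cases "x > 0")
    case True
    then show ?thesis using sums_mult[OF size_gf_sums[of "exp (-x)" p], of "w x"] by (simp add: mult_ac)
  qed (simp add: w(2))
  have G_le: "w x * size_gf p2 (exp (-x)) \<le> w x * exp (-x) ^ 1" for x
    using size_gf_le[of "exp (-x)" p2] w_nonneg[of x] w(2)[of x] by (cases "x > 0") (auto intro: mult_left_mono)
  show ?thesis
  proof (rule suminf_less_by_kernel[OF _ _ kernel C \<phi> _ _ _ _ sums sums, where l = l and u = u])
    have "(\<integral>\<^sup>+x. ennreal (w x * size_gf p2 (exp (-x))) \<partial>lborel)
          \<le> (\<integral>\<^sup>+x. ennreal (w x * exp (-x) ^ 1) \<partial>lborel)"
      by (intro nn_integral_mono ennreal_leI G_le)
    then show "(\<integral>\<^sup>+x. ennreal (w x * size_gf p2 (exp (-x))) \<partial>lborel) \<noteq> \<infinity>"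
      using kernel[of 1] by (auto simp: top_unique)
    show "w x * size_gf p1 (exp (-x)) \<le> w x * size_gf p2 (exp (-x))" for x
      using size_gf_mono_pgf[OF _ _ le, of "exp (-x)"] w_nonneg[of x] w(2)[of x]
      by (cases "x > 0") (auto intro: mult_left_mono)
    show "w x * size_gf p1 (exp (-x)) < w x * size_gf p2 (exp (-x))" if "x \<in> {l<..<u}" for x
      using lu that w(3)[of x] by simp
  qed (use w lu w_nonneg gw_size_prob_nonneg in auto)
qed

lemma gw_size_series_greater_by_laplace:
  fixes w c :: "real \<Rightarrow> real" and \<phi> :: "nat \<Rightarrow> real"
  assumes p1: "critical_finite_var p1" and p2: "critical_finite_var p2"
    and le: "\<forall>t\<in>{0<..<1}. pgf p1 t \<le> pgf p2 t" and lt: "\<exists>t\<in>{0<..<1}. pgf p1 t < pgf p2 t"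
    and w: "w \<in> borel_measurable borel" "\<And>x. x \<le> 0 \<Longrightarrow> w x = 0" "\<And>x. 0 < x \<Longrightarrow> 0 < w x"
    and c: "c \<in> borel_measurable borel" "\<And>x. 0 < x \<Longrightarrow> exp (-x) \<le> c x"
    and kernel: "\<And>n. 1 \<le> n \<Longrightarrow>
                   (\<integral>\<^sup>+x. ennreal (w x * (c x - exp (-x) ^ n)) \<partial>lborel) = ennreal (C * \<phi> n)"
    and C: "0 < C" and \<phi>: "\<And>n. 0 \<le> \<phi> n"
    and finite: "(\<integral>\<^sup>+x. ennreal (w x * (c x - size_gf p1 (exp (-x)))) \<partial>lborel) \<noteq> \<infinity>"
  shows "(\<Sum>n. gw_size_prob p2 n * \<phi> n) < (\<Sum>n. gw_size_prob p1 n * \<phi> n)"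
proof -
  have w_nonneg: "0 \<le> w x" for x using w(2,3)[of x] by fastforce
  obtain l u where lu: "0 < l" "l < u" "\<And>x. x \<in> {l<..<u} \<Longrightarrow> size_gf p1 (exp (-x)) < size_gf p2 (exp (-x))"
    using size_gf_exp_strict_mono_pgf[OF p1 le lt] by blast
  have sums: "(\<lambda>n. gw_size_prob p n * (w x * (c x - exp (-x) ^ n))) sums (w x * (c x - size_gf p (exp (-x))))"
    if "critical_finite_var p" for p x
  proof (cases "x > 0")
    case True
    have "(\<lambda>n. c x * gw_size_prob p n - gw_size_prob p n * exp (-x) ^ n) sums (c x * 1 - size_gf p (exp (-x)))"
      by (intro sums_diff sums_mult gw_size_prob_sums_1[OF that] size_gf_sums) (use True in simp)
    from sums_mult[OF this, of "w x"] show ?thesis by (simp add: algebra_simps)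
  qed (simp add: w(2))
  have K_nonneg: "0 \<le> w x * (c x - exp (-x) ^ n)" if "1 \<le> n" for x n
  proof (cases "x > 0")
    case True
    then have "exp (-x) ^ n \<le> exp (-x)" using power_decreasing[of 1 n "exp (-x)"] that by simp
    then show ?thesis using c(2)[OF True] w_nonneg[of x] by simp
  qed (simp add: w(2))
  show ?thesis
  proof (rule suminf_less_by_kernel[OF _ K_nonneg kernel C \<phi> _ _ _ _ sums[OF p2] sums[OF p1] _ _ _ finite,
                                    where l = l and u = u])
    show "w x * (c x - size_gf p2 (exp (-x))) \<le> w x * (c x - size_gf p1 (exp (-x)))" for x
      using size_gf_mono_pgf[OF _ _ le, of "exp (-x)"] w_nonneg[of x] w(2)[of x]
      by (cases "x > 0") (auto intro: mult_left_mono)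
    show "w x * (c x - size_gf p2 (exp (-x))) < w x * (c x - size_gf p1 (exp (-x)))"
      if "x \<in> {l<..<u}" for x
      using lu that w(3)[of x] by simp
  qed (use w c lu gw_size_prob_nonneg in auto)
qed

lemma gw_mu_less_of_pgf_less:
  assumes p1: "critical_finite_var p1"
    and le: "\<forall>t\<in>{0<..<1}. pgf p1 t \<le> pgf p2 t" and lt: "\<exists>t\<in>{0<..<1}. pgf p1 t < pgf p2 t"
    and \<alpha>: "\<alpha> < 0"
  shows "gw_mu p1 \<alpha> < gw_mu p2 \<alpha>"
  unfolding gw_mu_def
proof (rule gw_size_series_less_by_laplace[OF p1 le lt,
         where w = "\<lambda>x. indicator {0..} x * x powr (-\<alpha> - 1)" and C = "Gamma (-\<alpha>)"])
  show "(\<integral>\<^sup>+x. ennreal (indicator {0..} x * x powr (-\<alpha> - 1) * exp (-x) ^ n) \<partial>lborel)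
        = ennreal (Gamma (-\<alpha>) * real n powr \<alpha>)" if "1 \<le> n" for n
    using nn_integral_powr_exp_pow[of "-\<alpha>" n] that \<alpha> by simp
qed (use \<alpha> in auto)

lemma gw_mu_greater_of_pgf_less:
  assumes p1: "critical_finite_var p1" and p2: "critical_finite_var p2"
    and le: "\<forall>t\<in>{0<..<1}. pgf p1 t \<le> pgf p2 t" and lt: "\<exists>t\<in>{0<..<1}. pgf p1 t < pgf p2 t"
    and \<alpha>: "0 < \<alpha>" "\<alpha> < 1/2"
  shows "gw_mu p1 \<alpha> > gw_mu p2 \<alpha>"
  unfolding gw_mu_def
proof (rule gw_size_series_greater_by_laplace[OF p1 p2 le lt,
         where w = "\<lambda>x. indicator {0<..} x * x powr (-\<alpha> - 1)" and c = "\<lambda>_. 1" and C = "Gamma (1 - \<alpha>) / \<alpha>"])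
  show "(\<integral>\<^sup>+x. ennreal (indicator {0<..} x * x powr (-\<alpha> - 1) * (1 - exp (-x) ^ n)) \<partial>lborel)
        = ennreal (Gamma (1 - \<alpha>) / \<alpha> * real n powr \<alpha>)" for n
    by (rule nn_integral_powr_one_minus_exp_pow) (use \<alpha> in auto)
  show "(\<integral>\<^sup>+x. ennreal (indicator {0<..} x * x powr (-\<alpha> - 1) * (1 - size_gf p1 (exp (-x)))) \<partial>lborel) \<noteq> \<infinity>"
  proof (rule nn_integral_finite_by_powr_bounds[where a = "-\<alpha> - 1/2" and e = "-\<alpha> - 1"])
    show "indicator {0<..} x * x powr (-\<alpha> - 1) * (1 - size_gf p1 (exp (-x)))
          \<le> 1 / sqrt (branch_prob p1) * x powr (-\<alpha> - 1/2)" if "0 < x" for x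
      using powr_mult_one_minus_size_gf_exp_le[OF p1 that, of "-\<alpha> - 1"] that by (simp add: algebra_simps)
    show "indicator {0<..} x * x powr (-\<alpha> - 1) * (1 - size_gf p1 (exp (-x))) \<le> 1 * x powr (-\<alpha> - 1)"
      if "1 < x" for x
      using that size_gf_nonneg[of "exp (-x)" p1] by (simp add: mult_left_le)
  qed (use \<alpha> branch_prob_pos[OF p1] in auto)
qed (use \<alpha> in auto)

lemma gw_mu'_greater_of_pgf_less:
  assumes p1: "critical_finite_var p1" and p2: "critical_finite_var p2"
    and le: "\<forall>t\<in>{0<..<1}. pgf p1 t \<le> pgf p2 t" and lt: "\<exists>t\<in>{0<..<1}. pgf p1 t < pgf p2 t"
  shows "gw_mu' p1 > gw_mu' p2"
  unfolding gw_mu'_def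
proof (rule gw_size_series_greater_by_laplace[OF p1 p2 le lt,
         where w = "\<lambda>x. indicator {0<..} x / x" and c = "\<lambda>x. exp (-x)" and C = 1])
  show "(\<integral>\<^sup>+x. ennreal (indicator {0<..} x / x * (exp (-x) - exp (-x) ^ n)) \<partial>lborel)
        = ennreal (1 * ln (real n))" if "1 \<le> n" for n
    using nn_integral_exp_minus_exp_pow[OF that] by simp
  show "(\<integral>\<^sup>+x. ennreal (indicator {0<..} x / x * (exp (-x) - size_gf p1 (exp (-x)))) \<partial>lborel) \<noteq> \<infinity>"
  proof (rule nn_integral_finite_by_powr_bounds[where a = "-1/2" and e = "-2"])
    show "indicator {0<..} x / x * (exp (-x) - size_gf p1 (exp (-x)))
          \<le> 1 / sqrt (branch_prob p1) * x powr (-1/2)" if "0 < x" for x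
    proof -
      have "indicator {0<..} x / x * (exp (-x) - size_gf p1 (exp (-x)))
            \<le> x powr (-1) * (1 - size_gf p1 (exp (-x)))"
        using that by (simp add: powr_minus divide_right_mono field_simps)
      then show ?thesis using powr_mult_one_minus_size_gf_exp_le[OF p1 that, of "-1"] by simp
    qed
    show "indicator {0<..} x / x * (exp (-x) - size_gf p1 (exp (-x))) \<le> 1 * x powr (-2)" if "1 < x" for x
    proof -
      have "x \<le> exp x" using exp_ge_add_one_self[of x] by linarith
      then have "exp (-x) \<le> 1 / x" using that by (simp add: exp_minus field_simps)
      then have diff: "exp (-x) - size_gf p1 (exp (-x)) \<le> 1 / x"
        using size_gf_nonneg[of "exp (-x)" p1] that by simp
      have "indicator {0<..} x / x * (exp (-x) - size_gf p1 (exp (-x))) \<le> 1 / x / x"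
        using divide_right_mono[OF diff, of x] that by simp
      then show ?thesis using that by (simp add: powr_minus powr_realpow power2_eq_square divide_inverse)
    qed
  qed (use branch_prob_pos[OF p1] in auto)
  show "0 \<le> ln (real n)" for n by (cases "n = 0") auto
qed auto

theorem theorem6p8:
  fixes \<xi>1 \<xi>2 :: "nat pmf"
  assumes "critical_finite_var \<xi>1" and "critical_finite_var \<xi>2"
    and "\<forall>t\<in>{0<..<1}. pgf \<xi>1 t \<le> pgf \<xi>2 t"
    and "\<exists>t\<in>{0<..<1}. pgf \<xi>1 t < pgf \<xi>2 t"
  shows "(\<forall>\<alpha>::real. \<alpha> < 0 \<longrightarrow> gw_mu \<xi>1 \<alpha> < gw_mu \<xi>2 \<alpha>)
       \<and> (\<forall>\<alpha>::real. 0 < \<alpha> \<and> \<alpha> < 1/2 \<longrightarrow> gw_mu \<xi>1 \<alpha> > gw_mu \<xi>2 \<alpha>)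
       \<and> gw_mu' \<xi>1 > gw_mu' \<xi>2"
  using gw_mu_less_of_pgf_less[OF assms(1,3,4)] gw_mu_greater_of_pgf_less[OF assms]
    gw_mu'_greater_of_pgf_less[OF assms] by blast

end
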